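(* Consider an $s$-stage Runge--Kutta method with coefficients $a_{ij}$, $b_i$ ($i,j=1,\dots,s$). If \[ a_{ij}a_{ik} - a_{ij}a_{jk} - a_{ik}a_{kj} = 0\qquad\text{for all } i,j,k\text{ with } j\neq k, \tag{P} \] then, up to a permutation of the stages (i.e. there is a permutation $\sigma$ of $\{1,\dots,s\}$ such that the coefficients $a_{\sigma(i)\sigma(j)}, b_{\sigma(i)}$ define the method), the method is an explicit Runge--Kutta method or a DIRK method. Consequently, a Runge--Kutta method with all $b_i\neq0$ is quadratic projectable if and only if, up to a permutation of its stages, it is a SyDIRK method.
   Context: A Runge--Kutta method with coefficients $a_{ij},b_i$ with $a_{ij}=0$ whenever $j>i$ is called explicit if $a_{ii}=0$ for all $i$, and diagonally implicit (DIRK) otherwise. A Runge--Kutta method is quadratic projectable if it satisfies both $b_ib_j - b_ia_{ij} - b_ja_{ji}=0$ for all $i,j=1,\dots,s$, and condition (P). A symplectic diagonally implicit Runge--Kutta (SyDIRK) method is one whose coefficients are $a_{ij}=b_j$ for $j<i$, $a_{ii}=b_i/2$, $a_{ij}=0$ for $j>i$, for given nonzero $b_1,\dots,b_s$. *)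

theory Defs
  imports Complex_Main "HOL-Combinatorics.Permutations"
begin

definition rk_lower_triangular :: "nat \<Rightarrow> (nat \<Rightarrow> nat \<Rightarrow> real) \<Rightarrow> bool" where
  "rk_lower_triangular s A \<longleftrightarrow> (\<forall>i\<in>{1..s}. \<forall>j\<in>{1..s}. i < j \<longrightarrow> A i j = 0)"

definition explicit_RK :: "nat \<Rightarrow> (nat \<Rightarrow> nat \<Rightarrow> real) \<Rightarrow> bool" where
  "explicit_RK s A \<longleftrightarrow> rk_lower_triangular s A \<and> (\<forall>i\<in>{1..s}. A i i = 0)"

definition DIRK :: "nat \<Rightarrow> (nat \<Rightarrow> nat \<Rightarrow> real) \<Rightarrow> bool" where
  "DIRK s A \<longleftrightarrow> rk_lower_triangular s A \<and> \<not> (\<forall>i\<in>{1..s}. A i i = 0)"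

definition condition_P :: "nat \<Rightarrow> (nat \<Rightarrow> nat \<Rightarrow> real) \<Rightarrow> bool" where
  "condition_P s A \<longleftrightarrow>
     (\<forall>i\<in>{1..s}. \<forall>j\<in>{1..s}. \<forall>k\<in>{1..s}. j \<noteq> k \<longrightarrow>
        A i j * A i k - A i j * A j k - A i k * A k j = 0)"

definition quadratic_projectable :: "nat \<Rightarrow> (nat \<Rightarrow> nat \<Rightarrow> real) \<Rightarrow> (nat \<Rightarrow> real) \<Rightarrow> bool" where
  "quadratic_projectable s A b \<longleftrightarrow>
     (\<forall>i\<in>{1..s}. \<forall>j\<in>{1..s}. b i * b j - b i * A i j - b j * A j i = 0) \<and> condition_P s A"

definition SyDIRK :: "nat \<Rightarrow> (nat \<Rightarrow> nat \<Rightarrow> real) \<Rightarrow> (nat \<Rightarrow> real) \<Rightarrow> bool" where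
  "SyDIRK s A b \<longleftrightarrow> (\<forall>i\<in>{1..s}. b i \<noteq> 0) \<and>
     (\<forall>i\<in>{1..s}. \<forall>j\<in>{1..s}.
        A i j = (if j < i then b j else if j = i then b i / 2 else 0))"

end

theory Submission
  imports Defs
begin

text \<open>Condition (P) with j = i gives a_ij a_ji = 0 for i \<noteq> j, and if a_ij and a_jk are
  nonzero (j \<noteq> k) it forces a_ik \<noteq> 0. Hence "i \<noteq> j and a_ij \<noteq> 0" is a strict partial
  order on the stages; numbering the stages along a linear extension of it, obtained by sorting
  them by their number of successors, makes the coefficient matrix lower triangular.
  For a lower triangular method with nonzero weights, the symplecticity condition
  b_i b_j = b_i a_ij + b_j a_ji read for j < i and for j = i yields a_ij = b_j and
  a_ii = b_i / 2, which is the SyDIRK form; conversely the SyDIRK coefficients satisfy both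
  conditions by a case analysis on the order of the indices.\<close>

definition symplectic_RK :: "nat \<Rightarrow> (nat \<Rightarrow> nat \<Rightarrow> real) \<Rightarrow> (nat \<Rightarrow> real) \<Rightarrow> bool" where
  "symplectic_RK s A b \<longleftrightarrow>
     (\<forall>i\<in>{1..s}. \<forall>j\<in>{1..s}. b i * b j - b i * A i j - b j * A j i = 0)"

lemma quadratic_projectable_iff:
  "quadratic_projectable s A b \<longleftrightarrow> symplectic_RK s A b \<and> condition_P s A"
  unfolding quadratic_projectable_def symplectic_RK_def ..

lemma explicit_RK_or_DIRK_iff_lower_triangular:
  "explicit_RK s A \<or> DIRK s A \<longleftrightarrow> rk_lower_triangular s A"
  unfolding explicit_RK_def DIRK_def by blast

lemma permutes_sorting_key:
  fixes h :: "nat \<Rightarrow> 'a::linorder"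
  obtains \<sigma> where "\<sigma> permutes {1..s}"
    and "\<And>i j. i \<in> {1..s} \<Longrightarrow> j \<in> {1..s} \<Longrightarrow> i \<le> j \<Longrightarrow> h (\<sigma> i) \<le> h (\<sigma> j)"
proof
  define xs where "xs = sort_key h [1..<Suc s]"
  have set_xs: "set xs = {1..s}" and distinct_xs: "distinct xs"
    and length_xs: "length xs = s" and sorted_xs: "sorted (map h xs)"
    unfolding xs_def by auto
  define \<sigma> where "\<sigma> i = (if i \<in> {1..s} then xs ! (i - 1) else i)" for i
  have "bij_betw ((!) xs) {..<s} {1..s}"
    using bij_betw_nth[OF distinct_xs] length_xs set_xs by auto
  moreover have "bij_betw (\<lambda>i. i - 1) {1..s} {..<s}"
    by (rule bij_betwI[where g = Suc]) auto
  ultimately have "bij_betw ((!) xs \<circ> (\<lambda>i. i - 1)) {1..s} {1..s}"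
    by (rule bij_betw_trans[rotated])
  then have "bij_betw \<sigma> {1..s} {1..s}"
    by (rule bij_betw_cong[THEN iffD1, rotated]) (simp add: \<sigma>_def)
  then show "\<sigma> permutes {1..s}"
    by (rule bij_imp_permutes) (auto simp: \<sigma>_def)
  show "h (\<sigma> i) \<le> h (\<sigma> j)" if "i \<in> {1..s}" "j \<in> {1..s}" "i \<le> j" for i j
    using sorted_nth_mono[OF sorted_xs, of "i - 1" "j - 1"] that length_xs
    by (auto simp: \<sigma>_def)
qed

lemma card_successors_strict_mono:
  assumes "finite S"
    and R_asym: "\<And>x y. x \<in> S \<Longrightarrow> y \<in> S \<Longrightarrow> R x y \<Longrightarrow> \<not> R y x"
    and R_trans: "\<And>x y z. x \<in> S \<Longrightarrow> y \<in> S \<Longrightarrow> z \<in> S \<Longrightarrow> R x y \<Longrightarrow> R y z \<Longrightarrow> R x z"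
    and "x \<in> S" "y \<in> S" "R x y"
  shows "card {z \<in> S. R y z} < card {z \<in> S. R x z}"
proof (rule psubset_card_mono)
  show "finite {z \<in> S. R x z}" using \<open>finite S\<close> by simp
  have "y \<in> {z \<in> S. R x z}" and "y \<notin> {z \<in> S. R y z}"
    using R_asym assms(4-6) by blast+
  then show "{z \<in> S. R y z} \<subset> {z \<in> S. R x z}"
    using R_trans assms(4-6) by blast
qed

lemma strict_order_linear_extension_permutes:
  fixes s :: nat and R :: "nat \<Rightarrow> nat \<Rightarrow> bool"
  assumes R_asym: "\<And>x y. x \<in> {1..s} \<Longrightarrow> y \<in> {1..s} \<Longrightarrow> R x y \<Longrightarrow> \<not> R y x"
    and R_trans: "\<And>x y z. x \<in> {1..s} \<Longrightarrow> y \<in> {1..s} \<Longrightarrow> z \<in> {1..s} \<Longrightarrow>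
                  R x y \<Longrightarrow> R y z \<Longrightarrow> R x z"
  obtains \<sigma> where "\<sigma> permutes {1..s}"
    and "\<And>i j. i \<in> {1..s} \<Longrightarrow> j \<in> {1..s} \<Longrightarrow> i < j \<Longrightarrow> \<not> R (\<sigma> i) (\<sigma> j)"
proof -
  define h where "h x = card {z \<in> {1..s}. R x z}" for x
  obtain \<sigma> where perm: "\<sigma> permutes {1..s}"
    and mono: "\<And>i j. i \<in> {1..s} \<Longrightarrow> j \<in> {1..s} \<Longrightarrow> i \<le> j \<Longrightarrow> h (\<sigma> i) \<le> h (\<sigma> j)"
    using permutes_sorting_key[of s h] by blast
  have "\<not> R (\<sigma> i) (\<sigma> j)" if ij: "i \<in> {1..s}" "j \<in> {1..s}" "i < j" for i j
  proof
    assume "R (\<sigma> i) (\<sigma> j)"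
    moreover have "\<sigma> i \<in> {1..s}" "\<sigma> j \<in> {1..s}"
      using permutes_in_image[OF perm] ij by auto
    ultimately have "h (\<sigma> j) < h (\<sigma> i)"
      unfolding h_def using card_successors_strict_mono[of "{1..s}" R] R_asym R_trans by blast
    with mono[OF ij(1,2)] ij(3) show False by simp
  qed
  with perm show ?thesis by (rule that)
qed

lemma condition_P_offdiag_asym:
  assumes "condition_P s A" "i \<in> {1..s}" "j \<in> {1..s}" "i \<noteq> j" "A i j \<noteq> 0"
  shows "A j i = 0"
proof -
  have "A i i * A i j - A i i * A i j - A i j * A j i = 0"
    using assms(1-4) unfolding condition_P_def by blast
  with \<open>A i j \<noteq> 0\<close> show ?thesis by simp
qed

lemma condition_P_offdiag_trans:
  assumes "condition_P s A" "i \<in> {1..s}" "j \<in> {1..s}" "k \<in> {1..s}" "j \<noteq> k"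
    and "A i j \<noteq> 0" "A j k \<noteq> 0"
  shows "A i k \<noteq> 0"
proof
  assume "A i k = 0"
  moreover have "A i j * A i k - A i j * A j k - A i k * A k j = 0"
    using assms(1-5) unfolding condition_P_def by blast
  ultimately show False using assms(6,7) by simp
qed

lemma condition_P_imp_lower_triangular_permutes:
  assumes "condition_P s A"
  obtains \<sigma> where "\<sigma> permutes {1..s}" "rk_lower_triangular s (\<lambda>i j. A (\<sigma> i) (\<sigma> j))"
proof -
  define R where "R x y \<longleftrightarrow> x \<noteq> y \<and> A x y \<noteq> 0" for x y
  have R_asym: "\<not> R y x" if "x \<in> {1..s}" "y \<in> {1..s}" "R x y" for x y
    using condition_P_offdiag_asym[OF assms] that unfolding R_def by blast
  have R_trans: "R x z"
    if "x \<in> {1..s}" "y \<in> {1..s}" "z \<in> {1..s}" "R x y" "R y z" for x y z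
  proof -
    have "x \<noteq> z" using R_asym that by blast
    moreover have "A x z \<noteq> 0"
      using condition_P_offdiag_trans[OF assms that(1-3)] that(4,5) unfolding R_def by blast
    ultimately show ?thesis unfolding R_def ..
  qed
  obtain \<sigma> where perm: "\<sigma> permutes {1..s}"
    and no_R: "\<And>i j. i \<in> {1..s} \<Longrightarrow> j \<in> {1..s} \<Longrightarrow> i < j \<Longrightarrow> \<not> R (\<sigma> i) (\<sigma> j)"
    using strict_order_linear_extension_permutes[of s R] R_asym R_trans by blast
  have "A (\<sigma> i) (\<sigma> j) = 0" if "i \<in> {1..s}" "j \<in> {1..s}" "i < j" for i j
    using no_R[OF that] permutes_inj[OF perm] that unfolding R_def by (auto simp: inj_eq)
  with perm show ?thesis
    using that unfolding rk_lower_triangular_def by blast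
qed

lemma condition_P_permute:
  assumes "\<sigma> permutes {1..s}"
  shows "condition_P s (\<lambda>i j. A (\<sigma> i) (\<sigma> j)) \<longleftrightarrow> condition_P s A"
proof -
  have "condition_P s A \<longleftrightarrow>
    (\<forall>i\<in>\<sigma> ` {1..s}. \<forall>j\<in>\<sigma> ` {1..s}. \<forall>k\<in>\<sigma> ` {1..s}. j \<noteq> k \<longrightarrow>
        A i j * A i k - A i j * A j k - A i k * A k j = 0)"
    unfolding condition_P_def permutes_image[OF assms] ..
  also have "\<dots> \<longleftrightarrow> condition_P s (\<lambda>i j. A (\<sigma> i) (\<sigma> j))"
    using permutes_inj[OF assms] unfolding condition_P_def by (simp add: inj_eq)
  finally show ?thesis ..
qed

lemma symplectic_RK_permute:
  assumes "\<sigma> permutes {1..s}"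
  shows "symplectic_RK s (\<lambda>i j. A (\<sigma> i) (\<sigma> j)) (\<lambda>i. b (\<sigma> i)) \<longleftrightarrow> symplectic_RK s A b"
proof -
  have "symplectic_RK s A b \<longleftrightarrow>
    (\<forall>i\<in>\<sigma> ` {1..s}. \<forall>j\<in>\<sigma> ` {1..s}. b i * b j - b i * A i j - b j * A j i = 0)"
    unfolding symplectic_RK_def permutes_image[OF assms] ..
  also have "\<dots> \<longleftrightarrow> symplectic_RK s (\<lambda>i j. A (\<sigma> i) (\<sigma> j)) (\<lambda>i. b (\<sigma> i))"
    unfolding symplectic_RK_def by simp
  finally show ?thesis ..
qed

lemma quadratic_projectable_permute:
  assumes "\<sigma> permutes {1..s}"
  shows "quadratic_projectable s (\<lambda>i j. A (\<sigma> i) (\<sigma> j)) (\<lambda>i. b (\<sigma> i))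
           \<longleftrightarrow> quadratic_projectable s A b"
  using condition_P_permute[OF assms] symplectic_RK_permute[OF assms]
  by (simp add: quadratic_projectable_iff)

lemma SyDIRK_imp_quadratic_projectable:
  assumes "SyDIRK s A b"
  shows "quadratic_projectable s A b"
proof -
  have A: "A i j = (if j < i then b j else if j = i then b i / 2 else 0)"
    if "i \<in> {1..s}" "j \<in> {1..s}" for i j
    using assms that unfolding SyDIRK_def by blast
  have "b i * b j - b i * A i j - b j * A j i = 0"
    if "i \<in> {1..s}" "j \<in> {1..s}" for i j
    unfolding A[OF that] A[OF that(2,1)] by (simp add: algebra_simps)
  then have "symplectic_RK s A b"
    unfolding symplectic_RK_def by blast
  moreover have "A i j * A i k - A i j * A j k - A i k * A k j = 0"
    if "i \<in> {1..s}" "j \<in> {1..s}" "k \<in> {1..s}" "j \<noteq> k" for i j k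
    unfolding A[OF that(1,2)] A[OF that(1,3)] A[OF that(2,3)] A[OF that(3,2)]
    using \<open>j \<noteq> k\<close> by (cases j k rule: linorder_cases; cases k i rule: linorder_cases) auto
  then have "condition_P s A"
    unfolding condition_P_def by blast
  ultimately show ?thesis by (simp add: quadratic_projectable_iff)
qed

lemma lower_triangular_symplectic_imp_SyDIRK:
  assumes lower: "rk_lower_triangular s A" and sympl: "symplectic_RK s A b"
    and b: "\<forall>i\<in>{1..s}. b i \<noteq> 0"
  shows "SyDIRK s A b"
proof -
  have "A i j = (if j < i then b j else if j = i then b i / 2 else 0)"
    if i: "i \<in> {1..s}" and j: "j \<in> {1..s}" for i j
  proof -
    have "b i * b j - b i * A i j - b j * A j i = 0"
      using sympl i j unfolding symplectic_RK_def by blast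
    moreover have "b i \<noteq> 0" using b i by blast
    ultimately show ?thesis
      using lower i j unfolding rk_lower_triangular_def
      by (cases i j rule: linorder_cases) (auto simp: algebra_simps)
  qed
  with b show ?thesis unfolding SyDIRK_def by blast
qed

theorem theorem2p7:
  fixes s :: nat and A :: "nat \<Rightarrow> nat \<Rightarrow> real" and b :: "nat \<Rightarrow> real"
  shows "(condition_P s A \<longrightarrow>
            (\<exists>\<sigma>. \<sigma> permutes {1..s} \<and>
                 (explicit_RK s (\<lambda>i j. A (\<sigma> i) (\<sigma> j)) \<or> DIRK s (\<lambda>i j. A (\<sigma> i) (\<sigma> j)))))
       \<and> ((\<forall>i\<in>{1..s}. b i \<noteq> 0) \<longrightarrow>
            (quadratic_projectable s A b \<longleftrightarrow>
              (\<exists>\<sigma>. \<sigma> permutes {1..s} \<and>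
                 SyDIRK s (\<lambda>i j. A (\<sigma> i) (\<sigma> j)) (\<lambda>i. b (\<sigma> i)))))"
proof (intro conjI impI iffI)
  assume "condition_P s A"
  then show "\<exists>\<sigma>. \<sigma> permutes {1..s} \<and>
               (explicit_RK s (\<lambda>i j. A (\<sigma> i) (\<sigma> j)) \<or> DIRK s (\<lambda>i j. A (\<sigma> i) (\<sigma> j)))"
    by (metis condition_P_imp_lower_triangular_permutes explicit_RK_or_DIRK_iff_lower_triangular)
next
  assume b: "\<forall>i\<in>{1..s}. b i \<noteq> 0" and qp: "quadratic_projectable s A b"
  then obtain \<sigma> where \<sigma>: "\<sigma> permutes {1..s}"
    and lower: "rk_lower_triangular s (\<lambda>i j. A (\<sigma> i) (\<sigma> j))"
    using condition_P_imp_lower_triangular_permutes quadratic_projectable_iff by metis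
  have "symplectic_RK s (\<lambda>i j. A (\<sigma> i) (\<sigma> j)) (\<lambda>i. b (\<sigma> i))"
    using qp quadratic_projectable_permute[OF \<sigma>] quadratic_projectable_iff by blast
  moreover have "\<forall>i\<in>{1..s}. b (\<sigma> i) \<noteq> 0"
    using b permutes_in_image[OF \<sigma>] by blast
  ultimately show "\<exists>\<sigma>. \<sigma> permutes {1..s} \<and> SyDIRK s (\<lambda>i j. A (\<sigma> i) (\<sigma> j)) (\<lambda>i. b (\<sigma> i))"
    using \<sigma> lower lower_triangular_symplectic_imp_SyDIRK by blast
next
  assume "\<exists>\<sigma>. \<sigma> permutes {1..s} \<and> SyDIRK s (\<lambda>i j. A (\<sigma> i) (\<sigma> j)) (\<lambda>i. b (\<sigma> i))"
  then show "quadratic_projectable s A b"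
    using SyDIRK_imp_quadratic_projectable quadratic_projectable_permute by blast
qed

end
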